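(* Let $s\in\{1/2,1,3/2,\dots\}$, $N=2s$, and let $C,D,E$ be linear operators on $\mathcal{H}_s$ with $C=DE$. Let $p_C,p_D,p_E$ be their Majorana polynomials. Then \[ p_C(z)=(N!)^{-1}\,p_D(z_a,\partial_a)\,p_E(z_a,z^a),\qquad p_C(z)=(N!)^{-1}\,p_E(\partial^a,z^a)\,p_D(z_a,z^a). \] Here $p_D(z_a,\partial_a)$ denotes the differential operator obtained from $p_D(z_1,z_2,z^1,z^2)$ by replacing each $z^a$ by $\partial_a=\partial/\partial z_a$, and $p_E(\partial^a,z^a)$ the one obtained from $p_E$ by replacing each $z_a$ by $\partial^a=\partial/\partial z^a$; in each monomial the derivatives are placed to the right of the multiplication factors, so that they act only on the polynomial to the right.
   Context: $\mathcal{H}_s$ is the spin-$s$ Hilbert space with orthonormal $S_z$-eigenbasis $\{|s,m\rangle\}_{m=-s}^{s}$. Treat $z_1,z_2,z^1,z^2$ as four independent complex variables (formally $z^a=\overline{z_a}$), with $\partial_a z_b=\partial^a z^b=\delta_{ab}$, $\partial_a z^b=\partial^a z_b=0$. Define the bra $\langle -\mathbf n_B|=\sum_{m=-s}^{s}(-1)^{s-m}\sqrt{\binom{2s}{s-m}}\,z_1^{s+m}z_2^{s-m}\langle s,m|$ and the ket $|-\mathbf n_B\rangle=\sum_{m=-s}^{s}(-1)^{s-m}\sqrt{\binom{2s}{s-m}}\,(z^1)^{s+m}(z^2)^{s-m}|s,m\rangle$. The Majorana polynomial of an operator $C$ on $\mathcal{H}_s$ is $p_C(z)=\langle -\mathbf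 n_B|C|-\mathbf n_B\rangle$, a polynomial in $(z_1,z_2,z^1,z^2)$ each of whose monomials $z_1^\alpha z_2^\beta(z^1)^\gamma(z^2)^\delta$ has $\alpha+\beta=\gamma+\delta=N$. Repeated indices $a\in\{1,2\}$ are summed. *)

theory Defs
  imports "HOL-Analysis.Analysis"
begin

text \<open>N = 2s. The basis vector |s,m> is indexed by j = s + m in {0..N};
  then s - m = N - j. An operator on H_s is given by its matrix entries
  Op j k = <s,m|Op|s,m'> with j = s+m, k = s+m' (entries outside {0..N} are irrelevant).
  Polynomials in the four independent variables z_1, z_2, z^1, z^2 are represented as
  functions of four complex arguments (z1, z2, w1, w2), with w_a standing for z^a.\<close>

definition mcoef :: "nat \<Rightarrow> nat \<Rightarrow> complex" where
  "mcoef N j = (-1) ^ (N - j) * complex_of_real (sqrt (real (N choose (N - j))))"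

text \<open>Majorana polynomial p_C(z) = <-n_B| C |-n_B>.\<close>
definition majorana ::
  "nat \<Rightarrow> (nat \<Rightarrow> nat \<Rightarrow> complex) \<Rightarrow> complex \<Rightarrow> complex \<Rightarrow> complex \<Rightarrow> complex \<Rightarrow> complex" where
  "majorana N C z1 z2 w1 w2 =
     (\<Sum>j\<le>N. \<Sum>k\<le>N. mcoef N j * mcoef N k * z1 ^ j * z2 ^ (N - j) * C j k * w1 ^ k * w2 ^ (N - k))"

type_synonym fn4 = "complex \<Rightarrow> complex \<Rightarrow> complex \<Rightarrow> complex \<Rightarrow> complex"

definition pd_z1 :: "fn4 \<Rightarrow> fn4" where
  "pd_z1 f = (\<lambda>z1 z2 w1 w2. deriv (\<lambda>t. f t z2 w1 w2) z1)"
definition pd_z2 :: "fn4 \<Rightarrow> fn4" where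
  "pd_z2 f = (\<lambda>z1 z2 w1 w2. deriv (\<lambda>t. f z1 t w1 w2) z2)"
definition pd_w1 :: "fn4 \<Rightarrow> fn4" where
  "pd_w1 f = (\<lambda>z1 z2 w1 w2. deriv (\<lambda>t. f z1 z2 t w2) w1)"
definition pd_w2 :: "fn4 \<Rightarrow> fn4" where
  "pd_w2 f = (\<lambda>z1 z2 w1 w2. deriv (\<lambda>t. f z1 z2 w1 t) w2)"

definition majorana_op_left :: "nat \<Rightarrow> (nat \<Rightarrow> nat \<Rightarrow> complex) \<Rightarrow> fn4 \<Rightarrow> fn4" where
  "majorana_op_left N D f = (\<lambda>z1 z2 w1 w2.
     (\<Sum>j\<le>N. \<Sum>k\<le>N. mcoef N j * mcoef N k * z1 ^ j * z2 ^ (N - j) * D j k *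
        ((pd_z1 ^^ k) ((pd_z2 ^^ (N - k)) f)) z1 z2 w1 w2))"

definition majorana_op_right :: "nat \<Rightarrow> (nat \<Rightarrow> nat \<Rightarrow> complex) \<Rightarrow> fn4 \<Rightarrow> fn4" where
  "majorana_op_right N E f = (\<lambda>z1 z2 w1 w2.
     (\<Sum>j\<le>N. \<Sum>k\<le>N. mcoef N j * mcoef N k * E j k * w1 ^ k * w2 ^ (N - k) *
        ((pd_w1 ^^ j) ((pd_w2 ^^ (N - j)) f)) z1 z2 w1 w2))"

end

theory Submission
  imports Defs "HOL-Complex_Analysis.Complex_Singularities"
begin

(* Write p_E = \<Sum>_l z_1^l z_2^(N-l) g_l(z^1, z^2). The operator \<partial>_1^k \<partial>_2^(N-k) kills every
   term with l \<noteq> k, since it differentiates z_1^l or z_2^(N-l) more often than its degree,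
   and turns the term l = k into k! (N-k)! g_k. As the Majorana coefficients satisfy
   mcoef_k^2 k! (N-k)! = N!, substituting this into p_D(z_a, \<partial>_a) gives N! times the
   expansion of p_C as a matrix product. The second identity is the first one for the
   transposed product C^T = E^T D^T, with the roles of z_a and z^a exchanged. *)

lemma higher_deriv_sum:
  fixes f :: "'a \<Rightarrow> complex \<Rightarrow> complex"
  assumes "finite A" and "\<And>l. l \<in> A \<Longrightarrow> f l holomorphic_on UNIV"
  shows "(deriv ^^ n) (\<lambda>w. \<Sum>l\<in>A. f l w) z = (\<Sum>l\<in>A. (deriv ^^ n) (f l) z)"
  using assms
proof (induction A rule: finite_induct)
  case (insert a A)
  then show ?case
    by (simp add: higher_deriv_add[where S = UNIV] holomorphic_on_sum)
qed simp

(* pochhammer (Suc m - n) n is the falling factorial m (m-1) ... (m-n+1), the form used by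
   higher_deriv_power. *)
lemma higher_deriv_polynomial:
  fixes c :: "'a \<Rightarrow> complex"
  assumes "finite A"
  shows "(deriv ^^ n) (\<lambda>w. \<Sum>l\<in>A. c l * w ^ p l) z =
           (\<Sum>l\<in>A. c l * pochhammer (of_nat (Suc (p l) - n)) n * z ^ (p l - n))"
proof -
  have "(deriv ^^ n) (\<lambda>w. \<Sum>l\<in>A. c l * w ^ p l) z = (\<Sum>l\<in>A. (deriv ^^ n) (\<lambda>w. c l * w ^ p l) z)"
    using assms by (intro higher_deriv_sum[where f = "\<lambda>l w. c l * w ^ p l"] holomorphic_intros)
  also have "\<dots> = (\<Sum>l\<in>A. c l * (deriv ^^ n) (\<lambda>w. w ^ p l) z)"
    by (intro sum.cong refl higher_deriv_cmult[where A = UNIV]) (auto intro: holomorphic_intros)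
  finally show ?thesis
    using higher_deriv_power[of n "0::complex"] by (simp add: mult.assoc)
qed

lemma pochhammer_complementary:
  assumes "k \<le> N" and "l \<le> N"
  shows "pochhammer (of_nat (Suc l - k)) k * pochhammer (of_nat (Suc (N - l) - (N - k))) (N - k) =
           (if l = k then fact k * fact (N - k) else (0::'a::{comm_semiring_1,semiring_char_0}))"
proof -
  have "pochhammer (of_nat (Suc m - j)) j = (0::'a)" if "m < j" for m j
    using that by (simp add: pochhammer_0_left)
  moreover have "l < k \<or> N - l < N - k" if "l \<noteq> k" using that assms by auto
  ultimately show ?thesis by (auto simp: pochhammer_fact)
qed

lemma funpow_pd_z1: "(pd_z1 ^^ n) f z1 z2 w1 w2 = (deriv ^^ n) (\<lambda>t. f t z2 w1 w2) z1"
  by (induction n arbitrary: z1) (simp_all add: pd_z1_def)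

lemma funpow_pd_z2: "(pd_z2 ^^ n) f z1 z2 w1 w2 = (deriv ^^ n) (\<lambda>t. f z1 t w1 w2) z2"
  by (induction n arbitrary: z2) (simp_all add: pd_z2_def)

lemma pd_z_extract_coefficient:
  assumes "k \<le> N"
  shows "(pd_z1 ^^ k) ((pd_z2 ^^ (N - k))
           (\<lambda>z1 z2 w1 w2. \<Sum>l\<le>N. z1 ^ l * z2 ^ (N - l) * g l w1 w2)) z1 z2 w1 w2 =
         fact k * fact (N - k) * g k w1 w2"
proof -
  let ?P = "\<lambda>n m. pochhammer (of_nat (Suc m - n)) n :: complex"
  have "(deriv ^^ (N - k)) (\<lambda>t. \<Sum>l\<le>N. s ^ l * t ^ (N - l) * g l w1 w2) z2 =
          (\<Sum>l\<le>N. (s ^ l * g l w1 w2) * ?P (N - k) (N - l) * z2 ^ (N - l - (N - k)))" for s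
    using higher_deriv_polynomial[of "{..N}" "N - k" "\<lambda>l. s ^ l * g l w1 w2" "\<lambda>l. N - l" z2]
    by (simp add: ac_simps)
  then have "(pd_z1 ^^ k) ((pd_z2 ^^ (N - k))
           (\<lambda>z1 z2 w1 w2. \<Sum>l\<le>N. z1 ^ l * z2 ^ (N - l) * g l w1 w2)) z1 z2 w1 w2 =
        (deriv ^^ k) (\<lambda>s. \<Sum>l\<le>N. (?P (N - k) (N - l) * z2 ^ (N - l - (N - k)) * g l w1 w2) * s ^ l) z1"
    by (simp add: funpow_pd_z1 funpow_pd_z2 ac_simps)
  also have "\<dots> = (\<Sum>l\<le>N. ?P (N - k) (N - l) * z2 ^ (N - l - (N - k)) * g l w1 w2 *
                        ?P k l * z1 ^ (l - k))"
    by (rule higher_deriv_polynomial) simp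
  also have "\<dots> = (\<Sum>l\<le>N. (?P k l * ?P (N - k) (N - l)) *
                        (z1 ^ (l - k) * z2 ^ (N - l - (N - k)) * g l w1 w2))"
    by (simp add: ac_simps)
  also have "\<dots> = (\<Sum>l\<le>N. (if l = k then fact k * fact (N - k) else 0) *
                        (z1 ^ (l - k) * z2 ^ (N - l - (N - k)) * g l w1 w2))"
    using assms by (intro sum.cong refl arg_cong2[where f = "(*)"] pochhammer_complementary) auto
  finally show ?thesis
    using assms by (simp add: mult_delta_left)
qed

lemma mcoef_square_mult_fact:
  assumes "k \<le> N"
  shows "mcoef N k * mcoef N k * fact k * fact (N - k) = fact N"
proof -
  have "mcoef N k * mcoef N k = ((-1) ^ (N - k)) ^ 2 * of_real (sqrt (real (N choose (N - k)))) ^ 2"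
    by (simp add: mcoef_def power2_eq_square ac_simps)
  also have "\<dots> = of_nat (N choose k)"
    using binomial_symmetric[OF assms]
    by (simp flip: of_real_power power_mult add: power_mult_distrib)
  finally have "mcoef N k * mcoef N k * fact k * fact (N - k) =
      (of_nat (fact k * fact (N - k) * (N choose k)) :: complex)"
    by (simp add: ac_simps)
  then show ?thesis
    by (simp only: binomial_fact_lemma[OF assms] of_nat_fact)
qed

lemma majorana_op_left_majorana:
  assumes "\<And>j k. j \<le> N \<Longrightarrow> k \<le> N \<Longrightarrow> C j k = (\<Sum>l\<le>N. D j l * E l k)"
  shows "majorana_op_left N D (majorana N E) z1 z2 w1 w2 = fact N * majorana N C z1 z2 w1 w2"
proof -
  define row where "row k w1 w2 = (\<Sum>m\<le>N. mcoef N m * E k m * w1 ^ m * w2 ^ (N - m))" for k w1 w2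
  have E: "majorana N E = (\<lambda>z1 z2 w1 w2. \<Sum>l\<le>N. z1 ^ l * z2 ^ (N - l) * (mcoef N l * row l w1 w2))"
    unfolding majorana_def row_def sum_distrib_left by (intro ext sum.cong refl) (simp add: ac_simps)
  have "majorana_op_left N D (majorana N E) z1 z2 w1 w2 =
      (\<Sum>j\<le>N. \<Sum>k\<le>N. mcoef N j * z1 ^ j * z2 ^ (N - j) * D j k *
         (mcoef N k * mcoef N k * fact k * fact (N - k)) * row k w1 w2)"
    unfolding majorana_op_left_def E
    by (intro sum.cong refl) (subst pd_z_extract_coefficient, simp, simp add: ac_simps)
  also have "\<dots> = fact N * (\<Sum>j\<le>N. \<Sum>k\<le>N. mcoef N j * z1 ^ j * z2 ^ (N - j) * D j k * row k w1 w2)"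
    unfolding sum_distrib_left
    by (intro sum.cong refl) (subst mcoef_square_mult_fact, simp_all add: ac_simps)
  also have "\<dots> = fact N * majorana N C z1 z2 w1 w2"
  proof -
    have "majorana N C z1 z2 w1 w2 = (\<Sum>j\<le>N. \<Sum>m\<le>N. \<Sum>k\<le>N.
        (mcoef N j * z1 ^ j * z2 ^ (N - j) * D j k) * (mcoef N m * E k m * w1 ^ m * w2 ^ (N - m)))"
      unfolding majorana_def
      by (intro sum.cong refl) (simp add: assms sum_distrib_left sum_distrib_right ac_simps)
    also have "\<dots> = (\<Sum>j\<le>N. \<Sum>k\<le>N. mcoef N j * z1 ^ j * z2 ^ (N - j) * D j k * row k w1 w2)"
      unfolding row_def sum_distrib_left by (rule sum.cong[OF refl], rule sum.swap)
    finally show ?thesis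
      by simp
  qed
  finally show ?thesis .
qed

definition swap_vars :: "fn4 \<Rightarrow> fn4" where
  "swap_vars f = (\<lambda>z1 z2 w1 w2. f w1 w2 z1 z2)"

lemma swap_vars_apply [simp]: "swap_vars f z1 z2 w1 w2 = f w1 w2 z1 z2"
  by (simp add: swap_vars_def)

lemma majorana_transpose: "majorana N (\<lambda>j k. C k j) z1 z2 w1 w2 = majorana N C w1 w2 z1 z2"
  unfolding majorana_def by (subst sum.swap) (intro sum.cong refl, simp add: ac_simps)

lemma pd_z1_swap_vars: "pd_z1 (swap_vars f) = swap_vars (pd_w1 f)"
  by (simp add: pd_z1_def pd_w1_def swap_vars_def)

lemma pd_z2_swap_vars: "pd_z2 (swap_vars f) = swap_vars (pd_w2 f)"
  by (simp add: pd_z2_def pd_w2_def swap_vars_def)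

lemma funpow_intertwine:
  assumes "\<And>x. F (S x) = S (G x)"
  shows "(F ^^ n) (S x) = S ((G ^^ n) x)"
  by (induction n) (simp_all add: assms)

lemma majorana_op_right_eq_swap_vars:
  "majorana_op_right N E f = swap_vars (majorana_op_left N (\<lambda>j k. E k j) (swap_vars f))"
proof -
  have "(pd_z1 ^^ k) ((pd_z2 ^^ (N - k)) (swap_vars f)) =
      swap_vars ((pd_w1 ^^ k) ((pd_w2 ^^ (N - k)) f))" for k
    by (simp add: funpow_intertwine pd_z1_swap_vars pd_z2_swap_vars)
  then show ?thesis
    unfolding majorana_op_right_def majorana_op_left_def
    by (intro ext) (simp only: swap_vars_apply, subst sum.swap, intro sum.cong refl, simp add: ac_simps)
qed

theorem lemma1:
  fixes N :: nat and C D E :: "nat \<Rightarrow> nat \<Rightarrow> complex"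
  assumes "N \<ge> 1"
    and "\<And>j k. j \<le> N \<Longrightarrow> k \<le> N \<Longrightarrow> C j k = (\<Sum>l\<le>N. D j l * E l k)"
  shows "majorana N C = (\<lambda>z1 z2 w1 w2.
            majorana_op_left N D (majorana N E) z1 z2 w1 w2 / of_nat (fact N)) \<and>
         majorana N C = (\<lambda>z1 z2 w1 w2.
            majorana_op_right N E (majorana N D) z1 z2 w1 w2 / of_nat (fact N))"
proof -
  have left: "majorana_op_left N D (majorana N E) =
      (\<lambda>z1 z2 w1 w2. fact N * majorana N C z1 z2 w1 w2)"
    by (intro ext majorana_op_left_majorana assms(2))
  have transposed: "majorana_op_left N (\<lambda>j k. E k j) (majorana N (\<lambda>j k. D k j)) =
      (\<lambda>z1 z2 w1 w2. fact N * majorana N (\<lambda>j k. C k j) z1 z2 w1 w2)"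
    by (intro ext majorana_op_left_majorana) (simp add: assms(2) mult.commute)
  have "swap_vars (majorana N D) = majorana N (\<lambda>j k. D k j)"
    by (intro ext) (simp add: majorana_transpose[of N D])
  then have "majorana_op_right N E (majorana N D) =
      swap_vars (\<lambda>z1 z2 w1 w2. fact N * majorana N (\<lambda>j k. C k j) z1 z2 w1 w2)"
    by (simp add: majorana_op_right_eq_swap_vars transposed)
  also have "\<dots> = (\<lambda>z1 z2 w1 w2. fact N * majorana N C z1 z2 w1 w2)"
    by (intro ext) (simp add: majorana_transpose[of N C])
  finally show ?thesis
    using left by simp
qed

end
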